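(* Let $A$ and $C$ be machines. There exists a machine $B$ such that $B$ is a functional reduction of $A$ and $C$ is a state reduction of $B$ if and only if there exists a machine $B'$ such that $B'$ is a state reduction of $A$ and $C$ is a functional reduction of $B'$.
   Context: For a set $S$, a transition function on $S$ is a function $S\to S$, and $\Phi_S$ denotes the set of all of them. A machine $S\times\Phi'_S$ is a pair consisting of a set $S$ and a subset $\Phi'_S\subseteq\Phi_S$. Functional reduction: given machines $S\times\Phi'_1$ and $S\times\Phi'_2$ on the same state set, the latter is a functional reduction of the former iff $\Phi'_2\subseteq\Phi'_1$. State reduction: given machines $S\times\Phi'_S$ and $S'\times\Phi'_{S'}$, the latter is a state reduction of the former iff (1) $S'\subseteq S$; (2) for every $\varphi'\in\Phi'_{S'}$ there exists $\varphi\in\Phi'_S$ with $\varphi'(s)=\varphi(s)$ for all $s\in S'$; (3) for every $\varphi\in\Phi'_S$ with $\varphi(S')\subseteq S'$ there exists $\varphi'\in\Phi'_{S'}$ with $\varphi'(s)=\varphi(s)$ for all $s\in S'$. *)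

theory Defs
  imports "HOL-Library.FuncSet"
begin

text \<open>Functions S -> S are represented extensionally
  (elements of S ->E S, i.e. undefined outside S), so that distinct
  representations correspond to distinct mathematical functions.\<close>

type_synonym 'a machine = "'a set \<times> ('a \<Rightarrow> 'a) set"

definition is_machine :: "'a machine \<Rightarrow> bool" where
  "is_machine M \<longleftrightarrow> snd M \<subseteq> fst M \<rightarrow>\<^sub>E fst M"

definition functional_reduction :: "'a machine \<Rightarrow> 'a machine \<Rightarrow> bool" where
  "functional_reduction M2 M1 \<longleftrightarrow> fst M2 = fst M1 \<and> snd M2 \<subseteq> snd M1"

definition state_reduction :: "'a machine \<Rightarrow> 'a machine \<Rightarrow> bool" where
  "state_reduction M' M \<longleftrightarrow>
     fst M' \<subseteq> fst M \<and>
     (\<forall>\<phi>'\<in>snd M'. \<exists>\<phi>\<in>snd M. \<forall>s\<in>fst M'. \<phi>' s = \<phi> s) \<and>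
     (\<forall>\<phi>\<in>snd M. \<phi> ` fst M' \<subseteq> fst M' \<longrightarrow> (\<exists>\<phi>'\<in>snd M'. \<forall>s\<in>fst M'. \<phi>' s = \<phi> s))"

end

theory Submission
  imports Defs
begin

text \<open>Given A \<supseteq> B \<succ> C (functional, then state reduction), keep
  the states of C and add to its transitions the restrictions of all transitions of A
  that leave the states of C invariant. Given A \<succ> B' \<supseteq> C, keep the states of A and
  only those transitions of A that agree on the states of C with a transition of C.\<close>

definition invariant_restrictions :: "'a machine \<Rightarrow> 'a set \<Rightarrow> ('a \<Rightarrow> 'a) set" where
  "invariant_restrictions A S = {restrict \<phi> S | \<phi>. \<phi> \<in> snd A \<and> \<phi> ` S \<subseteq> S}"

definition extending_transitions :: "'a machine \<Rightarrow> 'a machine \<Rightarrow> ('a \<Rightarrow> 'a) set" where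
  "extending_transitions A C = {\<phi> \<in> snd A. \<exists>\<psi>\<in>snd C. \<forall>s\<in>fst C. \<psi> s = \<phi> s}"

lemma invariant_restrictions_PiE: "invariant_restrictions A S \<subseteq> S \<rightarrow>\<^sub>E S"
  unfolding invariant_restrictions_def by auto

lemma is_machine_add_invariant_restrictions:
  assumes "is_machine C"
  shows "is_machine (fst C, snd C \<union> invariant_restrictions A (fst C))"
  using assms invariant_restrictions_PiE[of A "fst C"] unfolding is_machine_def by auto

lemma functional_reduction_add_transitions: "functional_reduction (S, \<Phi>) (S, \<Phi> \<union> \<Psi>)"
  unfolding functional_reduction_def by auto

lemma state_reduction_add_invariant_restrictions:
  assumes BA: "functional_reduction B A" and CB: "state_reduction C B"
  shows "state_reduction (fst C, snd C \<union> invariant_restrictions A (fst C)) A"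
  unfolding state_reduction_def fst_conv snd_conv
proof (intro conjI ballI impI)
  show "fst C \<subseteq> fst A"
    using BA CB unfolding functional_reduction_def state_reduction_def by auto
next
  fix \<phi>' assume \<phi>': "\<phi>' \<in> snd C \<union> invariant_restrictions A (fst C)"
  show "\<exists>\<phi>\<in>snd A. \<forall>s\<in>fst C. \<phi>' s = \<phi> s"
  proof (cases "\<phi>' \<in> snd C")
    case True
    then obtain \<phi> where "\<phi> \<in> snd B" "\<forall>s\<in>fst C. \<phi>' s = \<phi> s"
      using CB unfolding state_reduction_def by blast
    then show ?thesis
      using BA unfolding functional_reduction_def by blast
  next
    case False
    then show ?thesis
      using \<phi>' unfolding invariant_restrictions_def by auto
  qed
next
  fix \<phi> assume "\<phi> \<in> snd A" "\<phi> ` fst C \<subseteq> fst C"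
  then have "restrict \<phi> (fst C) \<in> invariant_restrictions A (fst C)"
    unfolding invariant_restrictions_def by blast
  then show "\<exists>\<phi>'\<in>snd C \<union> invariant_restrictions A (fst C). \<forall>s\<in>fst C. \<phi>' s = \<phi> s"
    by (intro bexI[of _ "restrict \<phi> (fst C)"]) auto
qed

lemma is_machine_extending_transitions:
  assumes "is_machine A"
  shows "is_machine (fst A, extending_transitions A C)"
  using assms unfolding is_machine_def extending_transitions_def by auto

lemma functional_reduction_extending_transitions:
  "functional_reduction (fst A, extending_transitions A C) A"
  unfolding functional_reduction_def extending_transitions_def by auto

lemma state_reduction_extending_transitions:
  assumes B'A: "state_reduction B' A" and CB': "functional_reduction C B'"
  shows "state_reduction C (fst A, extending_transitions A C)"
  unfolding state_reduction_def fst_conv snd_conv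
proof (intro conjI ballI impI)
  show "fst C \<subseteq> fst A"
    using B'A CB' unfolding functional_reduction_def state_reduction_def by auto
next
  fix \<psi> assume \<psi>: "\<psi> \<in> snd C"
  moreover have "snd C \<subseteq> snd B'" "fst C = fst B'"
    using CB' unfolding functional_reduction_def by auto
  ultimately obtain \<phi> where "\<phi> \<in> snd A" "\<forall>s\<in>fst C. \<psi> s = \<phi> s"
    using B'A unfolding state_reduction_def by (metis subsetD)
  then show "\<exists>\<phi>\<in>extending_transitions A C. \<forall>s\<in>fst C. \<psi> s = \<phi> s"
    using \<psi> unfolding extending_transitions_def by auto
next
  fix \<phi> assume "\<phi> \<in> extending_transitions A C"
  then show "\<exists>\<phi>'\<in>snd C. \<forall>s\<in>fst C. \<phi>' s = \<phi> s"
    unfolding extending_transitions_def by auto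
qed

theorem lemma3:
  fixes A C :: "'a machine"
  assumes "is_machine A" and "is_machine C"
  shows "(\<exists>B. is_machine B \<and> functional_reduction B A \<and> state_reduction C B) \<longleftrightarrow>
         (\<exists>B'. is_machine B' \<and> state_reduction B' A \<and> functional_reduction C B')"
proof
  assume "\<exists>B. is_machine B \<and> functional_reduction B A \<and> state_reduction C B"
  then obtain B where "functional_reduction B A" "state_reduction C B" by blast
  then have "state_reduction (fst C, snd C \<union> invariant_restrictions A (fst C)) A"
    by (rule state_reduction_add_invariant_restrictions)
  moreover have "functional_reduction C (fst C, snd C \<union> invariant_restrictions A (fst C))"
    using functional_reduction_add_transitions[of "fst C" "snd C"] by simp
  ultimately show "\<exists>B'. is_machine B' \<and> state_reduction B' A \<and> functional_reduction C B'"
    using is_machine_add_invariant_restrictions[OF assms(2)] by blast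
next
  assume "\<exists>B'. is_machine B' \<and> state_reduction B' A \<and> functional_reduction C B'"
  then obtain B' where "state_reduction B' A" "functional_reduction C B'" by blast
  then show "\<exists>B. is_machine B \<and> functional_reduction B A \<and> state_reduction C B"
    using is_machine_extending_transitions[OF assms(1)]
      functional_reduction_extending_transitions state_reduction_extending_transitions
    by blast
qed

end
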